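(* In the interpolating system described in the context, let $\mathcal Z=n+\sqrt{B(t)/N}\,sz$ and, for replicas $\alpha=1,2$, $\mathcal Z^{(\alpha)}=n+\sqrt{B(t)/N}\,sz^{(\alpha)}$ with $z^{(\alpha)}=\mathbf 1-x^{(\alpha)}$. Then $$\frac1N\mathbb E\langle\|\mathcal Z\|^2\rangle_{t,u}=1\qquad\text{and}\qquad \mathbb E\bigl\langle(n\cdot\mathcal Z^{(2)})(z^{(1)}\cdot z^{(2)})\bigr\rangle_{t,u}=\sum_{k=1}^K\mathbb E\bigl\langle(n\cdot\mathcal Z)z_k\bigr\rangle_{t,u}.$$
   Context: Let $K,N$ with $K/N=\beta$, $B(t),\lambda(t)\ge0$ for $t\in[0,1]$, $u\ge0$. Random data: $n\in\mathbb R^N$, $w,h\in\mathbb R^K$ with i.i.d. $\mathcal N(0,1)$ entries, $N\times K$ matrix $s$ with i.i.d. $\mathcal N(0,1)$ entries, all independent; $\mathbb E$ is expectation over them. For $x\in\{\pm1\}^K$, $z=\mathbf 1-x$ ($\mathbf 1$ the all-ones vector) and $h_u(x)=\sqrt u\sum_kh_kx_k+u\sum_kx_k-\sqrt u\sum_k|h_k|$. Gibbs measure $p_{t,u}(x)\propto\exp\bigl(-\frac12\|n+N^{-1/2}B(t)^{1/2}sz\|^2-\frac12\|w+\lambda(t)^{1/2}z\|^2+h_u(x)\bigr)$ on $\{\pm1\}^K$. $\langle\cdot\rangle_{t,u}$ is average under $p_{t,u}$, extended to functions of two replicas $x^{(1)},x^{(2)}$ via the product measure $p_{t,u}(x^{(1)})p_{t,u}(x^{(2)})$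 with the same random data. *)

theory Defs
  imports "HOL-Probability.Probability"
begin

text \<open>Index type for all Gaussian random data: n_i (i<N), w_k, h_k (k<K), s_{ik}.\<close>
datatype ridx = Rn nat | Rw nat | Rh nat | Rs nat nat

definition data_idx :: "nat \<Rightarrow> nat \<Rightarrow> ridx set" where
  "data_idx N K = Rn ` {..<N} \<union> Rw ` {..<K} \<union> Rh ` {..<K}
      \<union> (\<lambda>(i,k). Rs i k) ` ({..<N} \<times> {..<K})"

definition gauss_data :: "nat \<Rightarrow> nat \<Rightarrow> (ridx \<Rightarrow> real) measure" where
  "gauss_data N K = (\<Pi>\<^sub>M j\<in>data_idx N K. density lborel (\<lambda>x. ennreal (std_normal_density x)))"

definition configs :: "nat \<Rightarrow> (nat \<Rightarrow> real) set" where
  "configs K = {..<K} \<rightarrow>\<^sub>E {-1, 1}"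

definition zvec :: "(nat \<Rightarrow> real) \<Rightarrow> nat \<Rightarrow> real" where
  "zvec x k = 1 - x k"

definition Zcomp :: "nat \<Rightarrow> nat \<Rightarrow> real \<Rightarrow> (ridx \<Rightarrow> real) \<Rightarrow> (nat \<Rightarrow> real) \<Rightarrow> nat \<Rightarrow> real" where
  "Zcomp N K b \<omega> x i = \<omega> (Rn i) + sqrt (b / real N) * (\<Sum>k<K. \<omega> (Rs i k) * zvec x k)"

definition h_u :: "nat \<Rightarrow> real \<Rightarrow> (ridx \<Rightarrow> real) \<Rightarrow> (nat \<Rightarrow> real) \<Rightarrow> real" where
  "h_u K u \<omega> x = sqrt u * (\<Sum>k<K. \<omega> (Rh k) * x k) + u * (\<Sum>k<K. x k)
      - sqrt u * (\<Sum>k<K. \<bar>\<omega> (Rh k)\<bar>)"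

definition logw :: "nat \<Rightarrow> nat \<Rightarrow> real \<Rightarrow> real \<Rightarrow> real \<Rightarrow> (ridx \<Rightarrow> real) \<Rightarrow> (nat \<Rightarrow> real) \<Rightarrow> real" where
  "logw N K b l u \<omega> x =
     - (1/2) * (\<Sum>i<N. (Zcomp N K b \<omega> x i)\<^sup>2)
     - (1/2) * (\<Sum>k<K. (\<omega> (Rw k) + sqrt l * zvec x k)\<^sup>2)
     + h_u K u \<omega> x"

definition gibbs1 :: "nat \<Rightarrow> nat \<Rightarrow> real \<Rightarrow> real \<Rightarrow> real \<Rightarrow> (ridx \<Rightarrow> real)
    \<Rightarrow> ((nat \<Rightarrow> real) \<Rightarrow> real) \<Rightarrow> real" where
  "gibbs1 N K b l u \<omega> f =
     (\<Sum>x\<in>configs K. f x * exp (logw N K b l u \<omega> x)) / (\<Sum>x\<in>configs K. exp (logw N K b l u \<omega> x))"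

definition gibbs2 :: "nat \<Rightarrow> nat \<Rightarrow> real \<Rightarrow> real \<Rightarrow> real \<Rightarrow> (ridx \<Rightarrow> real)
    \<Rightarrow> ((nat \<Rightarrow> real) \<Rightarrow> (nat \<Rightarrow> real) \<Rightarrow> real) \<Rightarrow> real" where
  "gibbs2 N K b l u \<omega> f =
     (\<Sum>x1\<in>configs K. \<Sum>x2\<in>configs K.
         f x1 x2 * exp (logw N K b l u \<omega> x1) * exp (logw N K b l u \<omega> x2))
     / (\<Sum>x\<in>configs K. exp (logw N K b l u \<omega> x))\<^sup>2"

end

theory Submission
  imports Defs
begin

text \<open>The Gibbs measure is the posterior of a planted signal observed through Gaussian channels:
  up to a data-dependent constant its log-weight is the log-likelihood of the data generated by
  the all-ones signal, and \<open>n + sqrt (B/N) s z\<close> is the residual of the channel \<open>n\<close> seen from the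
  replica \<open>x\<close>, so that \<open>n\<close> itself is the residual of the planted signal. A gauge transformation
  (coordinatewise sign flips, which preserve the noise) moves the planted signal to any
  \<open>t\<close>, and a Cameron--Martin shift of the noise turns the law of the data into the likelihood
  of \<open>t\<close>. Averaging over \<open>t\<close> gives the Bayes-optimal setting, where the signal is one more
  sample of the posterior: this is the Nishimori identity, exchanging the planted signal with a
  replica. The exchange turns the mean squared residual into \<open>E |n|\<^sup>2 = N\<close>, and for two replicas
  \<open>x, x'\<close> it cancels the last two terms of \<open>z \<cdot> z' = \<Sum>\<^sub>k (1 - x'\<^sub>k) - \<Sum>\<^sub>k x\<^sub>k + x \<cdot> x'\<close> against
  each other.\<close>

definition std_normal :: "real measure" where
  "std_normal = density lborel (\<lambda>x. ennreal (std_normal_density x))"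

lemma prob_space_std_normal: "prob_space std_normal"
  unfolding std_normal_def by (rule prob_space_normal_density) simp

lemma sets_std_normal [simp, measurable_cong]: "sets std_normal = sets borel"
  unfolding std_normal_def by simp

lemma space_std_normal [simp]: "space std_normal = UNIV"
  unfolding std_normal_def by simp

lemma borel_measurable_std_normal: "borel_measurable std_normal = borel_measurable borel"
  by (rule measurable_cong_sets) simp_all

lemma measurable_std_normal_eq_borel: "measurable M std_normal = borel_measurable M"
  by (rule measurable_cong_sets) simp_all

lemma product_sigma_finite_std_normal: "product_sigma_finite (\<lambda>_::'i. std_normal)"
  unfolding product_sigma_finite_def
  using prob_space_std_normal prob_space_imp_sigma_finite by blast

lemma product_prob_space_std_normal: "product_prob_space (\<lambda>_::'i. std_normal)"
  by (rule product_prob_spaceI) (rule prob_space_std_normal)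

lemma std_normal_density_shift:
  "std_normal_density (t - a) = std_normal_density t * exp (a * t - a\<^sup>2 / 2)"
  unfolding std_normal_density_def by (simp add: exp_add[symmetric] power2_eq_square field_simps)

lemma nn_integral_std_normal_shift:
  assumes [measurable]: "h \<in> borel_measurable borel"
  shows "(\<integral>\<^sup>+ t. h (t + a) \<partial>std_normal) = (\<integral>\<^sup>+ t. ennreal (exp (a * t - a\<^sup>2 / 2)) * h t \<partial>std_normal)"
proof -
  have "(\<integral>\<^sup>+ t. h (t + a) \<partial>std_normal)
      = (\<integral>\<^sup>+ t. ennreal (std_normal_density ((a + t) - a)) * h (a + t) \<partial>lborel)"
    unfolding std_normal_def by (subst nn_integral_density) (auto simp: add.commute)
  also have "\<dots> = (\<integral>\<^sup>+ t. ennreal (std_normal_density (t - a)) * h t \<partial>lborel)"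
    using nn_integral_real_affine[where c=1 and t=a and f="\<lambda>t. ennreal (std_normal_density (t - a)) * h t"]
    by simp
  also have "\<dots> = (\<integral>\<^sup>+ t. ennreal (std_normal_density t) * (ennreal (exp (a * t - a\<^sup>2 / 2)) * h t) \<partial>lborel)"
    by (intro nn_integral_cong)
       (simp add: std_normal_density_shift ennreal_mult' mult.assoc normal_density_nonneg)
  also have "\<dots> = (\<integral>\<^sup>+ t. ennreal (exp (a * t - a\<^sup>2 / 2)) * h t \<partial>std_normal)"
    unfolding std_normal_def by (subst nn_integral_density) auto
  finally show ?thesis .
qed

lemma nn_integral_std_normal_reflect:
  assumes [measurable]: "h \<in> borel_measurable borel" and s: "s = 1 \<or> s = -1"
  shows "(\<integral>\<^sup>+ t. h (s * t) \<partial>std_normal) = (\<integral>\<^sup>+ t. h t \<partial>std_normal)"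
proof (cases "s = 1")
  case False
  then have s: "s = -1" using s by auto
  have "(\<integral>\<^sup>+ t. h (s * t) \<partial>std_normal) = (\<integral>\<^sup>+ t. ennreal (std_normal_density t) * h (- t) \<partial>lborel)"
    unfolding std_normal_def s by (subst nn_integral_density) auto
  also have "\<dots> = (\<integral>\<^sup>+ t. ennreal (std_normal_density (- t)) * h t \<partial>lborel)"
    using nn_integral_real_affine[where c="-1" and t=0 and f="\<lambda>t. ennreal (std_normal_density t) * h (- t)"]
    by simp
  also have "\<dots> = (\<integral>\<^sup>+ t. h t \<partial>std_normal)"
    unfolding std_normal_def by (subst nn_integral_density) (auto simp: std_normal_density_def)
  finally show ?thesis .
qed simp

lemma nn_integral_PiM_std_normal_map_coordinates:
  fixes J :: "'i set" and f :: "'i \<Rightarrow> real \<Rightarrow> real" and r :: "'i \<Rightarrow> real \<Rightarrow> ennreal"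
  assumes "finite J"
    and [measurable]: "\<And>j. f j \<in> borel_measurable borel" "\<And>j. r j \<in> borel_measurable borel"
    and coord: "\<And>j h. j \<in> J \<Longrightarrow> h \<in> borel_measurable borel \<Longrightarrow>
       (\<integral>\<^sup>+ t. h (f j t) \<partial>std_normal) = (\<integral>\<^sup>+ t. r j t * h t \<partial>std_normal)"
    and "H \<in> borel_measurable (PiM J (\<lambda>_. std_normal))"
  shows "(\<integral>\<^sup>+ y. H (\<lambda>i\<in>J. f i (y i)) \<partial>PiM J (\<lambda>_. std_normal))
       = (\<integral>\<^sup>+ y. (\<Prod>i\<in>J. r i (y i)) * H y \<partial>PiM J (\<lambda>_. std_normal))"
  using assms(1) coord assms(5)
proof (induction J arbitrary: H rule: finite_induct)
  case empty
  interpret product_sigma_finite "\<lambda>_::'i. std_normal" by (rule product_sigma_finite_std_normal)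
  show ?case
    by (simp add: PiM_empty nn_integral_count_space_finite restrict_def)
next
  case (insert a J)
  interpret product_sigma_finite "\<lambda>_::'i. std_normal" by (rule product_sigma_finite_std_normal)
  let ?P = "\<lambda>J. PiM J (\<lambda>_::'i. std_normal)"
  note H[measurable] = insert.prems(2)
  have [measurable]: "(\<lambda>y. \<lambda>i\<in>L. f i (y i)) \<in> measurable (?P L) (?P L)" for L
    by (rule measurable_restrict) measurable
  define H' where "H' z = (\<integral>\<^sup>+ t. r a t * H (z(a := t)) \<partial>std_normal)" for z
  have [measurable]: "H' \<in> borel_measurable (?P J)"
    unfolding H'_def by measurable
  have H_update: "(\<lambda>t. H (x(a := t))) \<in> borel_measurable borel" if "x \<in> space (?P J)" for x
    using measurable_comp[OF measurable_component_update[OF that insert(2)] H]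
    unfolding comp_def borel_measurable_std_normal[symmetric] .
  have "(\<integral>\<^sup>+ y. H (\<lambda>i\<in>insert a J. f i (y i)) \<partial>?P (insert a J))
      = (\<integral>\<^sup>+ x. (\<integral>\<^sup>+ t. H (\<lambda>i\<in>insert a J. f i ((x(a := t)) i)) \<partial>std_normal) \<partial>?P J)"
    by (rule product_nn_integral_insert) (use insert in auto)
  also have "\<dots> = (\<integral>\<^sup>+ x. H' (\<lambda>i\<in>J. f i (x i)) \<partial>?P J)"
  proof (rule nn_integral_cong)
    fix x assume x: "x \<in> space (?P J)"
    have eq: "(\<lambda>i\<in>insert a J. f i ((x(a := t)) i)) = (\<lambda>i\<in>J. f i (x i))(a := f a t)" for t
      using insert(2) by (auto simp: restrict_def fun_eq_iff)
    have "(\<lambda>i\<in>J. f i (x i)) \<in> space (?P J)"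
      using x by (auto simp: space_PiM)
    then show "(\<integral>\<^sup>+ t. H (\<lambda>i\<in>insert a J. f i ((x(a := t)) i)) \<partial>std_normal) = H' (\<lambda>i\<in>J. f i (x i))"
      unfolding eq H'_def using insert.prems(1)[of a, OF _ H_update] by simp
  qed
  also have "\<dots> = (\<integral>\<^sup>+ x. (\<Prod>i\<in>J. r i (x i)) * H' x \<partial>?P J)"
    by (rule insert.IH) (use insert.prems in auto)
  also have "\<dots> = (\<integral>\<^sup>+ x. (\<integral>\<^sup>+ t. (\<Prod>i\<in>insert a J. r i ((x(a := t)) i)) * H (x(a := t)) \<partial>std_normal) \<partial>?P J)"
  proof (rule nn_integral_cong)
    fix x assume x: "x \<in> space (?P J)"
    have "(\<Prod>i\<in>insert a J. r i ((x(a := t)) i)) = r a t * (\<Prod>i\<in>J. r i (x i))" for t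
      using insert(1,2) by (simp, intro arg_cong[where f="\<lambda>z. r a t * z"] prod.cong) auto
    then show "(\<Prod>i\<in>J. r i (x i)) * H' x
        = (\<integral>\<^sup>+ t. (\<Prod>i\<in>insert a J. r i ((x(a := t)) i)) * H (x(a := t)) \<partial>std_normal)"
      unfolding H'_def using H_update[OF x]
      by (simp add: nn_integral_cmult[symmetric] borel_measurable_std_normal ac_simps)
  qed
  also have "\<dots> = (\<integral>\<^sup>+ y. (\<Prod>i\<in>insert a J. r i (y i)) * H y \<partial>?P (insert a J))"
    by (rule product_nn_integral_insert[symmetric]) (use insert in auto)
  finally show ?case .
qed

lemma distr_eq_density_if_nn_integral:
  assumes T[measurable]: "T \<in> measurable M M" and [measurable]: "R \<in> borel_measurable M"
    and nn_integral: "\<And>H. H \<in> borel_measurable M \<Longrightarrow> (\<integral>\<^sup>+ x. H (T x) \<partial>M) = (\<integral>\<^sup>+ x. R x * H x \<partial>M)"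
  shows "distr M M T = density M R"
proof (rule measure_eqI)
  fix A assume "A \<in> sets (distr M M T)"
  then have A[measurable]: "A \<in> sets M" by simp
  have "emeasure (distr M M T) A = (\<integral>\<^sup>+ x. indicator A (T x) \<partial>M)"
    by (subst emeasure_distr) (auto simp: nn_integral_indicator[symmetric] indicator_def intro!: nn_integral_cong)
  also have "\<dots> = emeasure (density M R) A"
    by (subst nn_integral) (auto simp: emeasure_density)
  finally show "emeasure (distr M M T) A = emeasure (density M R) A" .
qed simp

lemma nn_integral_PiM_std_normal_translate:
  assumes "finite J" and "H \<in> borel_measurable (PiM J (\<lambda>_. std_normal))"
  shows "(\<integral>\<^sup>+ y. H (\<lambda>j\<in>J. y j + a j) \<partial>PiM J (\<lambda>_. std_normal))
       = (\<integral>\<^sup>+ y. ennreal (exp (\<Sum>j\<in>J. a j * y j - (a j)\<^sup>2 / 2)) * H y \<partial>PiM J (\<lambda>_. std_normal))"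
proof -
  have "(\<integral>\<^sup>+ y. H (\<lambda>j\<in>J. y j + a j) \<partial>PiM J (\<lambda>_. std_normal))
      = (\<integral>\<^sup>+ y. (\<Prod>j\<in>J. ennreal (exp (a j * y j - (a j)\<^sup>2 / 2))) * H y \<partial>PiM J (\<lambda>_. std_normal))"
    using assms
    by (intro nn_integral_PiM_std_normal_map_coordinates) (auto intro: nn_integral_std_normal_shift)
  then show ?thesis
    using assms(1) by (simp add: prod_ennreal exp_sum)
qed

text \<open>A shift of the coordinates in \<open>J\<close> depending only on the coordinates in \<open>S\<close>: condition
  on \<open>S\<close>, then translate.\<close>
lemma nn_integral_PiM_std_normal_shift:
  fixes S J :: "'i set" and c :: "('i \<Rightarrow> real) \<Rightarrow> 'i \<Rightarrow> real"
  assumes fin: "finite S" "finite J" and disj: "S \<inter> J = {}"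
    and c_S: "\<And>x y j. (\<And>i. i \<in> S \<Longrightarrow> x i = y i) \<Longrightarrow> j \<in> J \<Longrightarrow> c x j = c y j"
    and c_zero: "\<And>x j. j \<in> S \<Longrightarrow> c x j = 0"
    and c_meas: "\<And>j. j \<in> J \<Longrightarrow> (\<lambda>x. c x j) \<in> borel_measurable (PiM (S \<union> J) (\<lambda>_. std_normal))"
    and H[measurable]: "H \<in> borel_measurable (PiM (S \<union> J) (\<lambda>_. std_normal))"
  shows "(\<integral>\<^sup>+ x. H (\<lambda>j\<in>S \<union> J. x j + c x j) \<partial>PiM (S \<union> J) (\<lambda>_. std_normal))
       = (\<integral>\<^sup>+ x. ennreal (exp (\<Sum>j\<in>J. c x j * x j - (c x j)\<^sup>2 / 2)) * H x \<partial>PiM (S \<union> J) (\<lambda>_. std_normal))"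
proof -
  interpret product_sigma_finite "\<lambda>_::'i. std_normal" by (rule product_sigma_finite_std_normal)
  let ?P = "\<lambda>J. PiM J (\<lambda>_::'i. std_normal)"
  define a where "a x = c (merge S J (x, \<lambda>_. undefined))" for x
  have c_merge: "c (\<lambda>i. if i \<in> S then x i else if i \<in> J then y i else undefined) j = a x j"
    if "j \<in> J" for x y j
    unfolding a_def by (rule c_S) (auto simp: merge_def that)
  have [measurable]: "(\<lambda>x. \<lambda>j\<in>S \<union> J. x j + c x j) \<in> measurable (?P (S \<union> J)) (?P (S \<union> J))"
  proof (rule measurable_restrict)
    fix j assume j: "j \<in> S \<union> J"
    have "(\<lambda>x. c x j) \<in> borel_measurable (?P (S \<union> J))"
      using j c_meas c_zero by (cases "j \<in> S") auto
    with j show "(\<lambda>x. x j + c x j) \<in> measurable (?P (S \<union> J)) std_normal"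
      unfolding measurable_std_normal_eq_borel by measurable
  qed
  have [measurable]: "(\<lambda>x. \<Sum>j\<in>J. c x j * x j - (c x j)\<^sup>2 / 2) \<in> borel_measurable (?P (S \<union> J))"
  proof (rule borel_measurable_sum)
    fix j assume j: "j \<in> J"
    note [measurable] = c_meas[OF j]
    have [measurable]: "(\<lambda>x. x j) \<in> borel_measurable (?P (S \<union> J))"
      using j measurable_component_singleton[of j "S \<union> J" "\<lambda>_. std_normal"]
      by (simp add: measurable_std_normal_eq_borel)
    show "(\<lambda>x. c x j * x j - (c x j)\<^sup>2 / 2) \<in> borel_measurable (?P (S \<union> J))"
      by measurable
  qed
  have shift_merge: "(\<lambda>j\<in>S \<union> J. merge S J (x, y) j + c (merge S J (x, y)) j)
      = merge S J (x, \<lambda>j\<in>J. y j + a x j)" for x y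
    using disj c_zero[of _ "merge S J (x, y)"] by (auto simp: merge_def c_merge fun_eq_iff)
  have "(\<integral>\<^sup>+ x. H (\<lambda>j\<in>S \<union> J. x j + c x j) \<partial>?P (S \<union> J))
      = (\<integral>\<^sup>+ x. (\<integral>\<^sup>+ y. H (merge S J (x, \<lambda>j\<in>J. y j + a x j)) \<partial>?P J) \<partial>?P S)"
    unfolding shift_merge[symmetric]
    by (rule product_nn_integral_fold) (use fin disj in auto)
  also have "\<dots> = (\<integral>\<^sup>+ x. (\<integral>\<^sup>+ y. ennreal (exp (\<Sum>j\<in>J. a x j * y j - (a x j)\<^sup>2 / 2))
                                  * H (merge S J (x, y)) \<partial>?P J) \<partial>?P S)"
  proof (rule nn_integral_cong)
    fix x assume x: "x \<in> space (?P S)"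
    have "(\<lambda>y. H (merge S J (x, y))) \<in> borel_measurable (?P J)"
      using measurable_comp[OF measurable_Pair1'[OF x] measurable_comp[OF measurable_merge H]]
      by (simp add: comp_def)
    then show "(\<integral>\<^sup>+ y. H (merge S J (x, \<lambda>j\<in>J. y j + a x j)) \<partial>?P J)
        = (\<integral>\<^sup>+ y. ennreal (exp (\<Sum>j\<in>J. a x j * y j - (a x j)\<^sup>2 / 2)) * H (merge S J (x, y)) \<partial>?P J)"
      by (rule nn_integral_PiM_std_normal_translate[OF fin(2)])
  qed
  also have "\<dots> = (\<integral>\<^sup>+ x. (\<integral>\<^sup>+ y. (\<lambda>z. ennreal (exp (\<Sum>j\<in>J. c z j * z j - (c z j)\<^sup>2 / 2)) * H z)
                                  (merge S J (x, y)) \<partial>?P J) \<partial>?P S)"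
  proof (intro nn_integral_cong)
    fix x y
    have "(\<Sum>j\<in>J. a x j * y j - (a x j)\<^sup>2 / 2)
        = (\<Sum>j\<in>J. c (merge S J (x, y)) j * merge S J (x, y) j - (c (merge S J (x, y)) j)\<^sup>2 / 2)"
      using disj by (auto simp: c_merge merge_def intro!: sum.cong)
    then show "ennreal (exp (\<Sum>j\<in>J. a x j * y j - (a x j)\<^sup>2 / 2)) * H (merge S J (x, y))
      = (\<lambda>z. ennreal (exp (\<Sum>j\<in>J. c z j * z j - (c z j)\<^sup>2 / 2)) * H z) (merge S J (x, y))"
      by simp
  qed
  also have "\<dots> = (\<integral>\<^sup>+ x. ennreal (exp (\<Sum>j\<in>J. c x j * x j - (c x j)\<^sup>2 / 2)) * H x \<partial>?P (S \<union> J))"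
    by (rule product_nn_integral_fold[symmetric]) (use fin disj in auto)
  finally show ?thesis .
qed

lemma integrable_PiM_std_normal_component_sq:
  "j \<in> I \<Longrightarrow> integrable (PiM I (\<lambda>_. std_normal)) (\<lambda>v. (v j)\<^sup>2)"
  and integral_PiM_std_normal_component_sq:
  "j \<in> I \<Longrightarrow> (\<integral>v. (v j)\<^sup>2 \<partial>PiM I (\<lambda>_. std_normal)) = 1"
proof -
  interpret product_prob_space "\<lambda>_. std_normal" I by (rule product_prob_space_std_normal)
  assume j: "j \<in> I"
  have "integrable std_normal (\<lambda>x. x\<^sup>2)" "(\<integral>x. x\<^sup>2 \<partial>std_normal) = 1"
    unfolding std_normal_def
    using integrable_std_normal_moment[of 2] integral_std_normal_moment_even[of 1]
    by (simp_all add: integrable_density integral_density normal_density_nonneg)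
  then show "integrable (PiM I (\<lambda>_. std_normal)) (\<lambda>v. (v j)\<^sup>2)"
    and "(\<integral>v. (v j)\<^sup>2 \<partial>PiM I (\<lambda>_. std_normal)) = 1"
    using PiM_component[OF j] measurable_component_singleton[OF j, of "\<lambda>_. std_normal"]
      integrable_distr_eq[of "\<lambda>v. v j" "PiM I (\<lambda>_. std_normal)" std_normal "\<lambda>x. x\<^sup>2"]
      integral_distr[of "\<lambda>v. v j" "PiM I (\<lambda>_. std_normal)" std_normal "\<lambda>x. x\<^sup>2"]
    by simp_all
qed

definition square_integrable :: "'a measure \<Rightarrow> ('a \<Rightarrow> real) \<Rightarrow> bool" where
  "square_integrable M f \<longleftrightarrow> f \<in> borel_measurable M \<and> integrable M (\<lambda>v. (f v)\<^sup>2)"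

lemma square_integrable_cmult: "square_integrable M f \<Longrightarrow> square_integrable M (\<lambda>v. c * f v)"
  unfolding square_integrable_def by (auto simp: power_mult_distrib)

lemma integrable_mult_if_square_integrable:
  assumes "square_integrable M f" "square_integrable M g"
  shows "integrable M (\<lambda>v. f v * g v)"
proof (rule Bochner_Integration.integrable_bound)
  show "integrable M (\<lambda>v. (f v)\<^sup>2 + (g v)\<^sup>2)"
    using assms by (auto simp: square_integrable_def)
  have "\<bar>x * y\<bar> \<le> x\<^sup>2 + y\<^sup>2" for x y :: real
  proof -
    have "0 \<le> (\<bar>x\<bar> - \<bar>y\<bar>)\<^sup>2" by simp
    then have "2 * (\<bar>x\<bar> * \<bar>y\<bar>) \<le> x\<^sup>2 + y\<^sup>2"
      by (simp add: power2_eq_square algebra_simps)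
    moreover have "0 \<le> \<bar>x\<bar> * \<bar>y\<bar>" by simp
    ultimately show ?thesis unfolding abs_mult by linarith
  qed
  then show "AE v in M. norm (f v * g v) \<le> norm ((f v)\<^sup>2 + (g v)\<^sup>2)"
    by (intro AE_I2) simp
qed (use assms in \<open>auto simp: square_integrable_def\<close>)

lemma square_integrable_add:
  assumes f: "square_integrable M f" and g: "square_integrable M g"
  shows "square_integrable M (\<lambda>v. f v + g v)"
proof -
  have "integrable M (\<lambda>v. (f v)\<^sup>2 + (g v)\<^sup>2 + 2 * f v * g v)"
    using assms integrable_mult_if_square_integrable[OF f g]
    by (auto simp: square_integrable_def mult.assoc)
  then show ?thesis
    using assms by (auto simp: square_integrable_def power2_sum)
qed

lemma square_integrable_sum:
  "(\<And>i. i \<in> A \<Longrightarrow> square_integrable M (f i)) \<Longrightarrow> square_integrable M (\<lambda>v. \<Sum>i\<in>A. f i v)"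
  by (induction A rule: infinite_finite_induct)
     (auto simp: square_integrable_def intro!: square_integrable_add[unfolded square_integrable_def])

lemma configs_cases: "x \<in> configs K \<Longrightarrow> k < K \<Longrightarrow> x k = 1 \<or> x k = -1"
  by (auto simp: configs_def PiE_def Pi_def)

lemma configs_square: "x \<in> configs K \<Longrightarrow> k < K \<Longrightarrow> x k * x k = 1"
  using configs_cases by fastforce

lemma finite_configs [simp]: "finite (configs K)"
  by (simp add: configs_def finite_PiE)

lemma card_configs: "card (configs K) = 2 ^ K"
  by (simp add: configs_def card_PiE numeral_2_eq_2)

lemma configs_nonempty [simp]: "configs K \<noteq> {}"
  by (simp add: configs_def PiE_eq_empty_iff)

definition ones :: "nat \<Rightarrow> nat \<Rightarrow> real" where
  "ones K = (\<lambda>k\<in>{..<K}. 1)"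

definition flip :: "nat \<Rightarrow> (nat \<Rightarrow> real) \<Rightarrow> (nat \<Rightarrow> real) \<Rightarrow> nat \<Rightarrow> real" where
  "flip K t x = (\<lambda>k\<in>{..<K}. t k * x k)"

lemma ones_configs: "ones K \<in> configs K"
  by (auto simp: ones_def configs_def)

lemma ones_apply [simp]: "k < K \<Longrightarrow> ones K k = 1"
  by (simp add: ones_def)

lemma flip_configs: "t \<in> configs K \<Longrightarrow> x \<in> configs K \<Longrightarrow> flip K t x \<in> configs K"
  using configs_cases[of t K] configs_cases[of x K] by (fastforce simp: flip_def configs_def)

lemma flip_flip: "t \<in> configs K \<Longrightarrow> x \<in> configs K \<Longrightarrow> flip K t (flip K t x) = x"
  using configs_square[of t K]
  by (auto simp: flip_def configs_def fun_eq_iff PiE_def extensional_def mult.assoc[symmetric])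

lemma flip_ones: "t \<in> configs K \<Longrightarrow> flip K t (ones K) = t"
  by (auto simp: flip_def ones_def configs_def fun_eq_iff PiE_def extensional_def)

lemma bij_betw_flip: "t \<in> configs K \<Longrightarrow> bij_betw (flip K t) (configs K) (configs K)"
  by (rule bij_betwI[where g="flip K t"]) (auto simp: flip_configs flip_flip)

lemma flip_mult_flip:
  "t \<in> configs K \<Longrightarrow> k < K \<Longrightarrow> flip K t x k * flip K t y k = x k * y k"
  using configs_square[of t K k] by (simp add: flip_def algebra_simps)

definition gibbs_avg :: "nat \<Rightarrow> ((nat \<Rightarrow> real) \<Rightarrow> real) \<Rightarrow> ((nat \<Rightarrow> real) \<Rightarrow> real) \<Rightarrow> real" where
  "gibbs_avg K E f = (\<Sum>x\<in>configs K. f x * exp (E x)) / (\<Sum>x\<in>configs K. exp (E x))"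

definition gibbs_avg2 :: "nat \<Rightarrow> ((nat \<Rightarrow> real) \<Rightarrow> real)
    \<Rightarrow> ((nat \<Rightarrow> real) \<Rightarrow> (nat \<Rightarrow> real) \<Rightarrow> real) \<Rightarrow> real" where
  "gibbs_avg2 K E f = (\<Sum>x1\<in>configs K. \<Sum>x2\<in>configs K. f x1 x2 * exp (E x1) * exp (E x2))
     / (\<Sum>x\<in>configs K. exp (E x))\<^sup>2"

lemma gibbs1_eq_gibbs_avg: "gibbs1 N K b l u \<omega> f = gibbs_avg K (logw N K b l u \<omega>) f"
  by (simp add: gibbs1_def gibbs_avg_def)

lemma gibbs2_eq_gibbs_avg2: "gibbs2 N K b l u \<omega> f = gibbs_avg2 K (logw N K b l u \<omega>) f"
  by (simp add: gibbs2_def gibbs_avg2_def)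

lemma partition_function_pos: "0 < (\<Sum>x\<in>configs K. exp (E x :: real))"
  by (rule sum_pos) auto

lemma gibbs_avg_shift_energy:
  assumes "\<And>x. x \<in> configs K \<Longrightarrow> E x = E' x + c"
  shows "gibbs_avg K E f = gibbs_avg K E' f"
proof -
  have "gibbs_avg K E f = ((\<Sum>x\<in>configs K. f x * exp (E' x)) * exp c)
      / ((\<Sum>x\<in>configs K. exp (E' x)) * exp c)"
    unfolding gibbs_avg_def sum_distrib_right
    by (intro arg_cong2[where f="(/)"] sum.cong) (auto simp: assms exp_add mult.assoc)
  then show ?thesis
    by (simp add: gibbs_avg_def)
qed

lemma gibbs_avg2_shift_energy:
  assumes "\<And>x. x \<in> configs K \<Longrightarrow> E x = E' x + c"
  shows "gibbs_avg2 K E f = gibbs_avg2 K E' f"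
proof -
  have "(\<Sum>x\<in>configs K. exp (E x)) = (\<Sum>x\<in>configs K. exp (E' x)) * exp c"
    unfolding sum_distrib_right by (rule sum.cong) (auto simp: assms exp_add)
  moreover have "(\<Sum>x1\<in>configs K. \<Sum>x2\<in>configs K. f x1 x2 * exp (E x1) * exp (E x2))
      = (\<Sum>x1\<in>configs K. \<Sum>x2\<in>configs K. f x1 x2 * exp (E' x1) * exp (E' x2)) * (exp c * exp c)"
    unfolding sum_distrib_right by (intro sum.cong refl) (auto simp: assms exp_add ac_simps)
  ultimately show ?thesis
    by (simp add: gibbs_avg2_def power2_eq_square)
qed

lemma gibbs_avg2_reindex:
  assumes \<phi>: "bij_betw \<phi> (configs K) (configs K)"
    and E: "\<And>x. x \<in> configs K \<Longrightarrow> E' (\<phi> x) = E x"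
  shows "gibbs_avg2 K E' f = gibbs_avg2 K E (\<lambda>x1 x2. f (\<phi> x1) (\<phi> x2))"
proof -
  have Z: "(\<Sum>x\<in>configs K. exp (E' x)) = (\<Sum>x\<in>configs K. exp (E x))"
    using sum.reindex_bij_betw[OF \<phi>, of "\<lambda>x. exp (E' x)"] E by simp
  have "(\<Sum>x1\<in>configs K. \<Sum>x2\<in>configs K. f x1 x2 * exp (E' x1) * exp (E' x2))
      = (\<Sum>x1\<in>configs K. \<Sum>x2\<in>configs K. f (\<phi> x1) x2 * exp (E' (\<phi> x1)) * exp (E' x2))"
    by (rule sum.reindex_bij_betw[OF \<phi>, symmetric])
  also have "\<dots> = (\<Sum>x1\<in>configs K. \<Sum>x2\<in>configs K.
                       f (\<phi> x1) (\<phi> x2) * exp (E' (\<phi> x1)) * exp (E' (\<phi> x2)))"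
    by (intro sum.cong refl sum.reindex_bij_betw[OF \<phi>, symmetric])
  also have "\<dots> = (\<Sum>x1\<in>configs K. \<Sum>x2\<in>configs K. f (\<phi> x1) (\<phi> x2) * exp (E x1) * exp (E x2))"
    by (intro sum.cong refl) (simp add: E)
  finally show ?thesis
    unfolding gibbs_avg2_def Z by simp
qed

lemma gibbs_avg2_cong:
  "(\<And>x1 x2. x1 \<in> configs K \<Longrightarrow> x2 \<in> configs K \<Longrightarrow> f x1 x2 = g x1 x2)
    \<Longrightarrow> gibbs_avg2 K E f = gibbs_avg2 K E g"
  unfolding gibbs_avg2_def by (intro arg_cong2[where f="(/)"] sum.cong refl) auto

lemma gibbs_avg2_snd: "gibbs_avg2 K E (\<lambda>x1 x2. f x2) = gibbs_avg K E f"
proof -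
  let ?Z = "\<Sum>x\<in>configs K. exp (E x)"
  have "(\<Sum>x1\<in>configs K. \<Sum>x2\<in>configs K. f x2 * exp (E x1) * exp (E x2))
      = ?Z * (\<Sum>x\<in>configs K. f x * exp (E x))"
    unfolding sum_product by (simp add: ac_simps)
  then show ?thesis
    using partition_function_pos[of E K] by (simp add: gibbs_avg2_def gibbs_avg_def power2_eq_square)
qed

lemma gibbs_avg_const: "gibbs_avg K E (\<lambda>_. c) = c"
  using partition_function_pos[of E K] by (simp add: gibbs_avg_def sum_distrib_left[symmetric])

lemma gibbs_avg_sum: "gibbs_avg K E (\<lambda>x. \<Sum>i\<in>A. f i x) = (\<Sum>i\<in>A. gibbs_avg K E (f i))"
  unfolding gibbs_avg_def
  by (simp add: sum_divide_distrib[symmetric] sum_distrib_right sum.swap[of _ A])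

lemma gibbs_avg2_add: "gibbs_avg2 K E (\<lambda>x1 x2. f x1 x2 + g x1 x2) = gibbs_avg2 K E f + gibbs_avg2 K E g"
  unfolding gibbs_avg2_def by (simp add: distrib_right sum.distrib add_divide_distrib)

lemma gibbs_avg2_diff: "gibbs_avg2 K E (\<lambda>x1 x2. f x1 x2 - g x1 x2) = gibbs_avg2 K E f - gibbs_avg2 K E g"
  unfolding gibbs_avg2_def by (simp add: left_diff_distrib sum_subtractf diff_divide_distrib)

lemma abs_gibbs_avg_le: "\<bar>gibbs_avg K E f\<bar> \<le> (\<Sum>x\<in>configs K. \<bar>f x\<bar>)"
proof -
  let ?Z = "\<Sum>x\<in>configs K. exp (E x)"
  have "\<bar>\<Sum>x\<in>configs K. f x * exp (E x)\<bar> \<le> (\<Sum>x\<in>configs K. \<bar>f x\<bar> * ?Z)"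
    by (rule order_trans[OF sum_abs sum_mono])
       (auto simp: abs_mult intro!: mult_left_mono member_le_sum)
  then show ?thesis
    using partition_function_pos[of E K]
    by (simp add: gibbs_avg_def abs_div pos_divide_le_eq sum_distrib_right)
qed

lemma abs_gibbs_avg2_le: "\<bar>gibbs_avg2 K E f\<bar> \<le> (\<Sum>x1\<in>configs K. \<Sum>x2\<in>configs K. \<bar>f x1 x2\<bar>)"
proof -
  let ?Z = "\<Sum>x\<in>configs K. exp (E x)"
  have e_le: "exp (E x) \<le> ?Z" if "x \<in> configs K" for x
    using that by (intro member_le_sum) auto
  have "\<bar>\<Sum>x1\<in>configs K. \<Sum>x2\<in>configs K. f x1 x2 * exp (E x1) * exp (E x2)\<bar>
      \<le> (\<Sum>x1\<in>configs K. \<Sum>x2\<in>configs K. \<bar>f x1 x2\<bar> * (?Z * ?Z))"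
    by (rule order_trans[OF sum_abs sum_mono], rule order_trans[OF sum_abs sum_mono])
       (auto simp: abs_mult mult.assoc intro!: mult_left_mono mult_mono e_le less_imp_le[OF partition_function_pos])
  also have "\<dots> = (\<Sum>x1\<in>configs K. \<Sum>x2\<in>configs K. \<bar>f x1 x2\<bar>) * ?Z\<^sup>2"
    by (simp add: sum_distrib_right power2_eq_square)
  finally show ?thesis
    using partition_function_pos[of E K]
    by (simp add: gibbs_avg2_def abs_div pos_divide_le_eq)
qed

lemma borel_measurable_gibbs_avg:
  assumes "\<And>x. (\<lambda>v. E v x) \<in> borel_measurable M"
    and "\<And>x. x \<in> configs K \<Longrightarrow> (\<lambda>v. f v x) \<in> borel_measurable M"
  shows "(\<lambda>v. gibbs_avg K (E v) (f v)) \<in> borel_measurable M"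
  unfolding gibbs_avg_def using assms by measurable

lemma borel_measurable_gibbs_avg2:
  assumes "\<And>x. (\<lambda>v. E v x) \<in> borel_measurable M"
    and "\<And>x1 x2. x1 \<in> configs K \<Longrightarrow> x2 \<in> configs K \<Longrightarrow> (\<lambda>v. f v x1 x2) \<in> borel_measurable M"
  shows "(\<lambda>v. gibbs_avg2 K (E v) (f v)) \<in> borel_measurable M"
  unfolding gibbs_avg2_def using assms by measurable

lemma integrable_gibbs_avg:
  assumes "\<And>x. (\<lambda>v. E v x) \<in> borel_measurable M"
    and f: "\<And>x. x \<in> configs K \<Longrightarrow> integrable M (\<lambda>v. f v x)"
  shows "integrable M (\<lambda>v. gibbs_avg K (E v) (f v))"
proof (rule Bochner_Integration.integrable_bound)
  show "integrable M (\<lambda>v. \<Sum>x\<in>configs K. \<bar>f v x\<bar>)"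
    using f by (intro Bochner_Integration.integrable_sum integrable_abs)
  show "(\<lambda>v. gibbs_avg K (E v) (f v)) \<in> borel_measurable M"
    using assms by (intro borel_measurable_gibbs_avg) auto
  show "AE v in M. norm (gibbs_avg K (E v) (f v)) \<le> norm (\<Sum>x\<in>configs K. \<bar>f v x\<bar>)"
    using abs_gibbs_avg_le by (intro AE_I2) (simp add: sum_nonneg)
qed

lemma integrable_gibbs_avg2:
  assumes "\<And>x. (\<lambda>v. E v x) \<in> borel_measurable M"
    and f: "\<And>x1 x2. x1 \<in> configs K \<Longrightarrow> x2 \<in> configs K \<Longrightarrow> integrable M (\<lambda>v. f v x1 x2)"
  shows "integrable M (\<lambda>v. gibbs_avg2 K (E v) (f v))"
proof (rule Bochner_Integration.integrable_bound)
  show "integrable M (\<lambda>v. \<Sum>x1\<in>configs K. \<Sum>x2\<in>configs K. \<bar>f v x1 x2\<bar>)"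
    using f by (intro Bochner_Integration.integrable_sum integrable_abs)
  show "(\<lambda>v. gibbs_avg2 K (E v) (f v)) \<in> borel_measurable M"
    using assms by (intro borel_measurable_gibbs_avg2) auto
  show "AE v in M. norm (gibbs_avg2 K (E v) (f v)) \<le> norm (\<Sum>x1\<in>configs K. \<Sum>x2\<in>configs K. \<bar>f v x1 x2\<bar>)"
    using abs_gibbs_avg2_le by (intro AE_I2) (simp add: sum_nonneg)
qed

text \<open>Weighted by \<open>exp (E t)\<close>, the configuration \<open>t\<close> is a third (unnormalised) replica, and
  it can be exchanged with the second one.\<close>
lemma sum_exp_mult_gibbs_avg2_swap:
  "(\<Sum>t\<in>configs K. exp (E t) * gibbs_avg2 K E (h t))
   = (\<Sum>t\<in>configs K. exp (E t) * gibbs_avg2 K E (\<lambda>x1 x2. h x2 x1 t))"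
proof -
  let ?C = "configs K" and ?e = "\<lambda>x. exp (E x)"
  have expand: "(\<Sum>t\<in>?C. ?e t * gibbs_avg2 K E (f t))
      = (\<Sum>t\<in>?C. \<Sum>x1\<in>?C. \<Sum>x2\<in>?C. f t x1 x2 * (?e t * ?e x1 * ?e x2)) / (\<Sum>x\<in>?C. ?e x)\<^sup>2" for f
    unfolding gibbs_avg2_def sum_divide_distrib
    by (intro sum.cong refl) (simp add: sum_distrib_left sum_divide_distrib ac_simps)
  have "(\<Sum>t\<in>?C. \<Sum>x1\<in>?C. \<Sum>x2\<in>?C. h x2 x1 t * (?e t * ?e x1 * ?e x2))
      = (\<Sum>x1\<in>?C. \<Sum>t\<in>?C. \<Sum>x2\<in>?C. h x2 x1 t * (?e t * ?e x1 * ?e x2))"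
    by (rule sum.swap)
  also have "\<dots> = (\<Sum>x1\<in>?C. \<Sum>x2\<in>?C. \<Sum>t\<in>?C. h x2 x1 t * (?e t * ?e x1 * ?e x2))"
    by (intro sum.cong refl sum.swap)
  also have "\<dots> = (\<Sum>x2\<in>?C. \<Sum>x1\<in>?C. \<Sum>t\<in>?C. h x2 x1 t * (?e t * ?e x1 * ?e x2))"
    by (rule sum.swap)
  also have "\<dots> = (\<Sum>t\<in>?C. \<Sum>x1\<in>?C. \<Sum>x2\<in>?C. h t x1 x2 * (?e t * ?e x1 * ?e x2))"
    by (intro sum.cong refl) (simp add: ac_simps)
  finally show ?thesis
    unfolding expand by simp
qed

lemma mem_data_idx [simp]:
  "Rn i \<in> data_idx N K \<longleftrightarrow> i < N" "Rw k \<in> data_idx N K \<longleftrightarrow> k < K"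
  "Rh k \<in> data_idx N K \<longleftrightarrow> k < K" "Rs i k \<in> data_idx N K \<longleftrightarrow> i < N \<and> k < K"
  by (auto simp: data_idx_def)

lemma finite_data_idx [simp]: "finite (data_idx N K)"
  by (simp add: data_idx_def)

locale interpolation_model =
  fixes N K :: nat and b l u :: real
  assumes u_nonneg: "u \<ge> 0"
begin

abbreviation I :: "ridx set" where "I \<equiv> data_idx N K"

definition design_idx :: "ridx set" where
  "design_idx = (\<lambda>(i, k). Rs i k) ` ({..<N} \<times> {..<K})"

definition noisy_idx :: "ridx set" where
  "noisy_idx = Rn ` {..<N} \<union> Rw ` {..<K} \<union> Rh ` {..<K}"

lemma data_idx_eq: "I = design_idx \<union> noisy_idx"
  unfolding data_idx_def design_idx_def noisy_idx_def by auto

lemma design_noisy_disjoint: "design_idx \<inter> noisy_idx = {}"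
  unfolding design_idx_def noisy_idx_def by auto

lemma finite_design_idx: "finite design_idx" and finite_noisy_idx: "finite noisy_idx"
  unfolding design_idx_def noisy_idx_def by auto

lemma mem_design_idx: "j \<in> design_idx \<longleftrightarrow> (\<exists>i k. j = Rs i k \<and> i < N \<and> k < K)"
  unfolding design_idx_def by auto

lemma mem_data_idx_if_noisy: "j \<in> noisy_idx \<Longrightarrow> j \<in> I"
  unfolding noisy_idx_def by auto

lemma sum_noisy_idx:
  "(\<Sum>j\<in>noisy_idx. F j) = (\<Sum>i<N. F (Rn i)) + (\<Sum>k<K. F (Rw k)) + (\<Sum>k<K. F (Rh k))"
proof -
  have "(Rn ` {..<N} \<union> Rw ` {..<K}) \<inter> Rh ` {..<K} = {}" "Rn ` {..<N} \<inter> Rw ` {..<K} = {}"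
    by auto
  then show ?thesis
    unfolding noisy_idx_def by (simp add: sum.union_disjoint sum.reindex inj_on_def)
qed

text \<open>The mean of observation \<open>j\<close> when the signal is \<open>x\<close>; the design matrix is observed
  noiselessly, so its entries carry no drift.\<close>
definition drift :: "(nat \<Rightarrow> real) \<Rightarrow> (ridx \<Rightarrow> real) \<Rightarrow> ridx \<Rightarrow> real" where
  "drift x v j = (case j of Rn i \<Rightarrow> sqrt (b / real N) * (\<Sum>k<K. v (Rs i k) * x k)
      | Rw k \<Rightarrow> sqrt l * x k | Rh k \<Rightarrow> sqrt u * x k | Rs i k \<Rightarrow> 0)"

definition observe :: "(nat \<Rightarrow> real) \<Rightarrow> (ridx \<Rightarrow> real) \<Rightarrow> ridx \<Rightarrow> real" where
  "observe x v = (\<lambda>j\<in>I. v j + drift x v j)"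

definition loglik :: "(ridx \<Rightarrow> real) \<Rightarrow> (nat \<Rightarrow> real) \<Rightarrow> real" where
  "loglik ob x = - (1/2) * (\<Sum>j\<in>noisy_idx. (ob j - drift x ob j)\<^sup>2)"

definition residual :: "(nat \<Rightarrow> real) \<Rightarrow> (ridx \<Rightarrow> real) \<Rightarrow> nat \<Rightarrow> real" where
  "residual x ob i = ob (Rn i) - drift x ob (Rn i)"

definition gauge_sign :: "(nat \<Rightarrow> real) \<Rightarrow> ridx \<Rightarrow> real" where
  "gauge_sign t j = (case j of Rn i \<Rightarrow> 1 | Rw k \<Rightarrow> t k | Rh k \<Rightarrow> t k | Rs i k \<Rightarrow> t k)"

definition gauge :: "(nat \<Rightarrow> real) \<Rightarrow> (ridx \<Rightarrow> real) \<Rightarrow> ridx \<Rightarrow> real" where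
  "gauge t v = (\<lambda>j\<in>I. gauge_sign t j * v j)"

definition shift :: "(nat \<Rightarrow> real) \<Rightarrow> (ridx \<Rightarrow> real) \<Rightarrow> ridx \<Rightarrow> real" where
  "shift x v = (\<lambda>j\<in>I. v j + (drift x v j - drift (ones K) v j))"

lemma drift_design [simp]: "drift x v (Rs i k) = 0"
  by (simp add: drift_def)

lemma drift_zero_if_design: "j \<in> design_idx \<Longrightarrow> drift x v j = 0"
  by (auto simp: mem_design_idx)

lemma drift_cong_design:
  assumes "\<And>j. j \<in> design_idx \<Longrightarrow> v j = w j" and "j \<in> I"
  shows "drift x v j = drift x w j"
  using assms by (cases j) (auto simp: drift_def mem_design_idx intro!: sum.cong)

lemma drift_observe [simp]: "j \<in> I \<Longrightarrow> drift x (observe y v) j = drift x v j"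
  by (rule drift_cong_design) (auto simp: observe_def mem_design_idx)

lemma drift_shift [simp]: "j \<in> I \<Longrightarrow> drift x (shift y v) j = drift x v j"
  by (rule drift_cong_design) (auto simp: shift_def mem_design_idx)

lemma gauge_sign_square: "t \<in> configs K \<Longrightarrow> j \<in> I \<Longrightarrow> gauge_sign t j * gauge_sign t j = 1"
  by (cases j) (auto simp: gauge_sign_def configs_square)

lemma drift_gauge:
  assumes t: "t \<in> configs K" and j: "j \<in> I"
  shows "drift (flip K t x) (gauge t v) j = gauge_sign t j * drift x v j"
proof (cases j)
  case (Rn i)
  have "gauge t v (Rs i k) * flip K t x k = v (Rs i k) * x k" if "k < K" for k
    using Rn j that configs_square[OF t that]
    by (simp add: gauge_def gauge_sign_def flip_def algebra_simps)
  then show ?thesis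
    using Rn by (simp add: drift_def gauge_sign_def)
qed (use j in \<open>auto simp: drift_def gauge_sign_def flip_def\<close>)

lemma loglik_gauge:
  assumes t: "t \<in> configs K"
  shows "loglik (gauge t ob) (flip K t x) = loglik ob x"
  unfolding loglik_def
proof (intro arg_cong[where f="\<lambda>s. - (1/2) * s"] sum.cong refl)
  fix j assume "j \<in> noisy_idx"
  then have j: "j \<in> I" by (rule mem_data_idx_if_noisy)
  have "(gauge t ob j - drift (flip K t x) (gauge t ob) j)\<^sup>2
      = (gauge_sign t j * gauge_sign t j) * (ob j - drift x ob j)\<^sup>2"
    unfolding drift_gauge[OF t j] using j by (simp add: gauge_def power2_eq_square algebra_simps)
  then show "(gauge t ob j - drift (flip K t x) (gauge t ob) j)\<^sup>2 = (ob j - drift x ob j)\<^sup>2"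
    using gauge_sign_square[OF t j] by simp
qed

lemma gauge_observe: "t \<in> configs K \<Longrightarrow> gauge t (observe (ones K) v) = observe t (gauge t v)"
  using drift_gauge[of t _ "ones K" v]
  by (auto simp: fun_eq_iff gauge_def observe_def flip_ones distrib_left)

lemma observe_shift: "observe x v = observe (ones K) (shift x v)"
  unfolding observe_def
proof (rule restrict_ext)
  fix j assume "j \<in> I"
  then show "v j + drift x v j = shift x v j + drift (ones K) (shift x v) j"
    using drift_shift[of j "ones K" x v] by (simp add: shift_def)
qed

lemma residual_gauge: "t \<in> configs K \<Longrightarrow> i < N \<Longrightarrow> residual (flip K t x) (gauge t ob) i = residual x ob i"
  using drift_gauge[of t "Rn i" x ob] by (simp add: residual_def gauge_def gauge_sign_def)

lemma residual_ones_observe: "i < N \<Longrightarrow> residual (ones K) (observe (ones K) v) i = v (Rn i)"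
  using drift_observe[of "Rn i" "ones K" "ones K" v] by (simp add: residual_def observe_def)

lemma Zcomp_eq_residual: "i < N \<Longrightarrow> Zcomp N K b v x i = residual x (observe (ones K) v) i"
  using drift_observe[of "Rn i" x "ones K" v]
  by (simp add: Zcomp_def residual_def observe_def drift_def zvec_def right_diff_distrib
      sum_subtractf algebra_simps)

lemma loglik_observe_ones:
  "loglik (observe (ones K) v) x
     = - (1/2) * (\<Sum>j\<in>noisy_idx. (v j - (drift x v j - drift (ones K) v j))\<^sup>2)"
  unfolding loglik_def
proof (intro arg_cong[where f="\<lambda>s. - (1/2) * s"] sum.cong refl)
  fix j assume "j \<in> noisy_idx"
  then have j: "j \<in> I" by (rule mem_data_idx_if_noisy)
  then have "observe (ones K) v j = v j + drift (ones K) v j"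
    by (simp add: observe_def)
  then show "(observe (ones K) v j - drift x (observe (ones K) v) j)\<^sup>2
      = (v j - (drift x v j - drift (ones K) v j))\<^sup>2"
    using drift_observe[OF j] by (simp add: algebra_simps)
qed

lemma loglik_ratio:
  "loglik (observe (ones K) v) x - loglik (observe (ones K) v) (ones K)
     = (\<Sum>j\<in>noisy_idx. (drift x v j - drift (ones K) v j) * v j - (drift x v j - drift (ones K) v j)\<^sup>2 / 2)"
proof -
  have "loglik (observe (ones K) v) x - loglik (observe (ones K) v) (ones K)
      = - (1/2) * (\<Sum>j\<in>noisy_idx. (v j - (drift x v j - drift (ones K) v j))\<^sup>2)
        - - (1/2) * (\<Sum>j\<in>noisy_idx. (v j)\<^sup>2)"
    unfolding loglik_observe_ones by simp
  also have "\<dots> = (\<Sum>j\<in>noisy_idx. - (1/2) * (v j - (drift x v j - drift (ones K) v j))\<^sup>2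
                                  - - (1/2) * (v j)\<^sup>2)"
    by (simp only: sum_distrib_left sum_subtractf)
  also have "\<dots> = (\<Sum>j\<in>noisy_idx. (drift x v j - drift (ones K) v j) * v j
                                  - (drift x v j - drift (ones K) v j)\<^sup>2 / 2)"
    by (rule sum.cong) (simp_all add: power2_eq_square field_simps)
  finally show ?thesis .
qed

definition logw_offset :: "(ridx \<Rightarrow> real) \<Rightarrow> real" where
  "logw_offset w = (1/2) * (\<Sum>k<K. (w (Rh k) + sqrt u)\<^sup>2) + u * K / 2 - sqrt u * (\<Sum>k<K. \<bar>w (Rh k)\<bar>)"

text \<open>Up to terms independent of \<open>x\<close>, \<open>h_u\<close> is the log-likelihood of the channel \<open>Rh\<close>: complete the
  square using \<open>x\<^sub>k\<^sup>2 = 1\<close>.\<close>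
lemma logw_eq_loglik:
  assumes x: "x \<in> configs K"
  shows "logw N K b l u w x = loglik (observe (ones K) w) x + logw_offset w"
proof -
  let ?d = "\<lambda>j. w j - (drift x w j - drift (ones K) w j)"
  have n: "?d (Rn i) = Zcomp N K b w x i" if "i < N" for i
    using that drift_observe[of "Rn i" x "ones K" w]
    by (simp add: Zcomp_eq_residual residual_def observe_def)
  have h: "- (1/2) * (?d (Rh k))\<^sup>2
      = - (1/2) * (w (Rh k) + sqrt u)\<^sup>2 - u / 2 + sqrt u * (w (Rh k) * x k) + u * x k" if "k < K" for k
  proof -
    have "sqrt u * sqrt u = u" using u_nonneg by simp
    with configs_cases[OF x that] show ?thesis
      using that by (auto simp: drift_def power2_eq_square algebra_simps)
  qed
  have sum_n: "(\<Sum>i<N. (?d (Rn i))\<^sup>2) = (\<Sum>i<N. (Zcomp N K b w x i)\<^sup>2)"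
    by (simp add: n)
  have w: "(\<Sum>k<K. (?d (Rw k))\<^sup>2) = (\<Sum>k<K. (w (Rw k) + sqrt l * zvec x k)\<^sup>2)"
    by (simp add: drift_def zvec_def algebra_simps)
  have sum_h: "- (1/2) * (\<Sum>k<K. (?d (Rh k))\<^sup>2)
      = - (1/2) * (\<Sum>k<K. (w (Rh k) + sqrt u)\<^sup>2) - u * K / 2
        + sqrt u * (\<Sum>k<K. w (Rh k) * x k) + u * (\<Sum>k<K. x k)"
  proof -
    have "- (1/2) * (\<Sum>k<K. (?d (Rh k))\<^sup>2) = (\<Sum>k<K. - (1/2) * (?d (Rh k))\<^sup>2)"
      by (rule sum_distrib_left)
    also have "\<dots> = (\<Sum>k<K. - (1/2) * (w (Rh k) + sqrt u)\<^sup>2 - u / 2 + sqrt u * (w (Rh k) * x k) + u * x k)"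
      by (intro sum.cong refl h) simp
    finally show ?thesis
      by (simp add: sum.distrib sum_subtractf sum_distrib_left)
  qed
  have "loglik (observe (ones K) w) x
      = - (1/2) * (\<Sum>i<N. (Zcomp N K b w x i)\<^sup>2) - (1/2) * (\<Sum>k<K. (w (Rw k) + sqrt l * zvec x k)\<^sup>2)
        - (1/2) * (\<Sum>k<K. (?d (Rh k))\<^sup>2)"
    unfolding loglik_observe_ones sum_noisy_idx sum_n w by (simp only: algebra_simps)
  then show ?thesis
    using sum_h unfolding logw_def h_u_def logw_offset_def by linarith
qed

lemma gibbs1_eq_loglik: "gibbs1 N K b l u w f = gibbs_avg K (loglik (observe (ones K) w)) f"
  unfolding gibbs1_eq_gibbs_avg by (rule gibbs_avg_shift_energy) (rule logw_eq_loglik)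

lemma gibbs2_eq_loglik: "gibbs2 N K b l u w f = gibbs_avg2 K (loglik (observe (ones K) w)) f"
  unfolding gibbs2_eq_gibbs_avg2 by (rule gibbs_avg2_shift_energy) (rule logw_eq_loglik)

abbreviation Gauss :: "(ridx \<Rightarrow> real) measure" where
  "Gauss \<equiv> PiM I (\<lambda>_. std_normal)"

lemma gauss_data_eq_Gauss: "gauss_data N K = Gauss"
  by (simp add: gauss_data_def std_normal_def)

lemma measurable_component_Gauss: "j \<in> I \<Longrightarrow> (\<lambda>v. v j) \<in> borel_measurable Gauss"
  using measurable_component_singleton[of j I "\<lambda>_. std_normal"] by (simp add: measurable_std_normal_eq_borel)

lemma measurable_drift: "j \<in> I \<Longrightarrow> (\<lambda>v. drift x v j) \<in> borel_measurable Gauss"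
proof (cases j)
  case (Rn i)
  moreover assume "j \<in> I"
  ultimately have [measurable]: "(\<lambda>v. v (Rs i k)) \<in> borel_measurable Gauss" if "k \<in> {..<K}" for k
    using that by (intro measurable_component_Gauss) simp
  have "(\<lambda>v. drift x v j) = (\<lambda>v. sqrt (b / real N) * (\<Sum>k<K. v (Rs i k) * x k))"
    using Rn by (simp add: drift_def)
  then show ?thesis
    by simp
qed (simp_all add: drift_def)

lemma measurable_loglik [measurable]: "(\<lambda>ob. loglik ob x) \<in> borel_measurable Gauss"
  unfolding loglik_def
  using measurable_component_Gauss measurable_drift mem_data_idx_if_noisy by measurable

lemma measurable_residual [measurable]: "i \<in> {..<N} \<Longrightarrow> (\<lambda>ob. residual x ob i) \<in> borel_measurable Gauss"
  unfolding residual_def using measurable_component_Gauss measurable_drift by measurable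

lemma measurable_observe [measurable]: "observe x \<in> measurable Gauss Gauss"
  unfolding observe_def
proof (rule measurable_restrict)
  fix j assume "j \<in> I"
  note [measurable] = measurable_component_Gauss[OF this] measurable_drift[OF this]
  show "(\<lambda>v. v j + drift x v j) \<in> measurable Gauss std_normal"
    unfolding measurable_std_normal_eq_borel by measurable
qed

lemma measurable_gauge [measurable]: "gauge t \<in> measurable Gauss Gauss"
  unfolding gauge_def
  by (rule measurable_restrict) (simp add: measurable_std_normal_eq_borel measurable_component_Gauss)

lemma measurable_shift [measurable]: "shift x \<in> measurable Gauss Gauss"
  unfolding shift_def
proof (rule measurable_restrict)
  fix j assume "j \<in> I"
  note [measurable] = measurable_component_Gauss[OF this] measurable_drift[OF this]
  show "(\<lambda>v. v j + (drift x v j - drift (ones K) v j)) \<in> measurable Gauss std_normal"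
    unfolding measurable_std_normal_eq_borel by measurable
qed

lemma distr_gauge:
  assumes t: "t \<in> configs K"
  shows "distr Gauss Gauss (gauge t) = Gauss"
proof -
  have "distr Gauss Gauss (gauge t) = density Gauss (\<lambda>_. 1)"
  proof (rule distr_eq_density_if_nn_integral)
    fix H :: "(ridx \<Rightarrow> real) \<Rightarrow> ennreal" assume "H \<in> borel_measurable Gauss"
    moreover have "gauge_sign t j = 1 \<or> gauge_sign t j = -1" if "j \<in> I" for j
      using that configs_cases[OF t] by (cases j) (auto simp: gauge_sign_def)
    ultimately have "(\<integral>\<^sup>+ v. H (\<lambda>j\<in>I. gauge_sign t j * v j) \<partial>Gauss) = (\<integral>\<^sup>+ v. (\<Prod>j\<in>I. 1) * H v \<partial>Gauss)"
      by (intro nn_integral_PiM_std_normal_map_coordinates) (auto intro: nn_integral_std_normal_reflect)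
    then show "(\<integral>\<^sup>+ v. H (gauge t v) \<partial>Gauss) = (\<integral>\<^sup>+ v. 1 * H v \<partial>Gauss)"
      by (simp add: gauge_def)
  qed simp_all
  then show ?thesis
    by (simp add: density_1)
qed

definition likelihood_ratio :: "(nat \<Rightarrow> real) \<Rightarrow> (ridx \<Rightarrow> real) \<Rightarrow> real" where
  "likelihood_ratio x v = exp (loglik (observe (ones K) v) x - loglik (observe (ones K) v) (ones K))"

lemma measurable_likelihood_ratio [measurable]: "likelihood_ratio x \<in> borel_measurable Gauss"
  unfolding likelihood_ratio_def by measurable

lemma distr_shift: "distr Gauss Gauss (shift x) = density Gauss (\<lambda>v. ennreal (likelihood_ratio x v))"
proof (rule distr_eq_density_if_nn_integral)
  fix H :: "(ridx \<Rightarrow> real) \<Rightarrow> ennreal" assume H: "H \<in> borel_measurable Gauss"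
  have "shift x = (\<lambda>v. \<lambda>j\<in>design_idx \<union> noisy_idx. v j + (drift x v j - drift (ones K) v j))"
    unfolding shift_def data_idx_eq ..
  moreover have "(\<integral>\<^sup>+ v. H (\<lambda>j\<in>design_idx \<union> noisy_idx. v j + (drift x v j - drift (ones K) v j)) \<partial>Gauss)
      = (\<integral>\<^sup>+ v. ennreal (likelihood_ratio x v) * H v \<partial>Gauss)"
    unfolding likelihood_ratio_def loglik_ratio data_idx_eq
  proof (rule nn_integral_PiM_std_normal_shift)
    fix v w :: "ridx \<Rightarrow> real" and j
    assume "\<And>i. i \<in> design_idx \<Longrightarrow> v i = w i" and "j \<in> noisy_idx"
    then show "drift x v j - drift (ones K) v j = drift x w j - drift (ones K) w j"
      using drift_cong_design mem_data_idx_if_noisy by metis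
  next
    fix j assume "j \<in> noisy_idx"
    then show "(\<lambda>v. drift x v j - drift (ones K) v j) \<in> borel_measurable (PiM (design_idx \<union> noisy_idx) (\<lambda>_. std_normal))"
      using mem_data_idx_if_noisy measurable_drift unfolding data_idx_eq by (intro borel_measurable_diff) auto
  qed (use H in \<open>auto simp: finite_design_idx finite_noisy_idx design_noisy_disjoint drift_zero_if_design data_idx_eq\<close>)
  ultimately show "(\<integral>\<^sup>+ v. H (shift x v) \<partial>Gauss) = (\<integral>\<^sup>+ v. ennreal (likelihood_ratio x v) * H v \<partial>Gauss)"
    by simp
qed simp_all

lemma integral_comp_shift_gauge:
  assumes "t \<in> configs K" and [measurable]: "f \<in> borel_measurable Gauss"
  shows "(\<integral>v. f (shift t (gauge t v)) \<partial>Gauss) = (\<integral>v. likelihood_ratio t v * f v \<partial>Gauss)"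
proof -
  have "(\<integral>v. f (shift t (gauge t v)) \<partial>Gauss) = (\<integral>v. f (shift t v) \<partial>distr Gauss Gauss (gauge t))"
    by (simp add: integral_distr)
  also have "\<dots> = (\<integral>v. f v \<partial>distr Gauss Gauss (shift t))"
    by (simp add: distr_gauge[OF assms(1)] integral_distr)
  also have "\<dots> = (\<integral>v. likelihood_ratio t v * f v \<partial>Gauss)"
    by (simp add: distr_shift integral_density likelihood_ratio_def)
  finally show ?thesis .
qed

lemma integrable_comp_shift_gauge_iff:
  assumes "t \<in> configs K" and [measurable]: "f \<in> borel_measurable Gauss"
  shows "integrable Gauss (\<lambda>v. f (shift t (gauge t v))) \<longleftrightarrow> integrable Gauss (\<lambda>v. likelihood_ratio t v * f v)"
proof -
  have "integrable Gauss (\<lambda>v. f (shift t (gauge t v))) \<longleftrightarrow> integrable (distr Gauss Gauss (gauge t)) (\<lambda>v. f (shift t v))"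
    by (simp add: integrable_distr_eq)
  also have "\<dots> \<longleftrightarrow> integrable (distr Gauss Gauss (shift t)) f"
    by (simp add: distr_gauge[OF assms(1)] integrable_distr_eq)
  also have "\<dots> \<longleftrightarrow> integrable Gauss (\<lambda>v. likelihood_ratio t v * f v)"
    by (simp add: distr_shift integrable_density likelihood_ratio_def)
  finally show ?thesis .
qed

text \<open>An observable \<open>g s ob x1 x2\<close> of the true signal \<open>s\<close>, the data \<open>ob\<close> and two replicas.\<close>
definition gauge_invariant :: "((nat \<Rightarrow> real) \<Rightarrow> (ridx \<Rightarrow> real) \<Rightarrow> (nat \<Rightarrow> real) \<Rightarrow> (nat \<Rightarrow> real) \<Rightarrow> real) \<Rightarrow> bool" where
  "gauge_invariant g \<longleftrightarrow> (\<forall>t\<in>configs K. \<forall>s\<in>configs K. \<forall>x1\<in>configs K. \<forall>x2\<in>configs K. \<forall>ob.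
      g (flip K t s) (gauge t ob) (flip K t x1) (flip K t x2) = g s ob x1 x2)"

definition posterior_avg2 :: "((nat \<Rightarrow> real) \<Rightarrow> (ridx \<Rightarrow> real) \<Rightarrow> (nat \<Rightarrow> real) \<Rightarrow> (nat \<Rightarrow> real) \<Rightarrow> real)
    \<Rightarrow> (nat \<Rightarrow> real) \<Rightarrow> (ridx \<Rightarrow> real) \<Rightarrow> real" where
  "posterior_avg2 g s v = gibbs_avg2 K (loglik (observe (ones K) v)) (g s (observe (ones K) v))"

lemma measurable_posterior_avg2:
  assumes "\<And>s x1 x2. (\<lambda>ob. g s ob x1 x2) \<in> borel_measurable Gauss"
  shows "posterior_avg2 g s \<in> borel_measurable Gauss"
  unfolding posterior_avg2_def
  by (rule borel_measurable_gibbs_avg2) (use assms in measurable)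

text \<open>Moving the planted signal from \<open>ones K\<close> to \<open>t\<close>: a gauge transformation followed by a
  shift of the noise.\<close>
lemma posterior_avg2_ones_eq_shift_gauge:
  assumes g: "gauge_invariant g" and t: "t \<in> configs K"
  shows "posterior_avg2 g (ones K) v = posterior_avg2 g t (shift t (gauge t v))"
proof -
  let ?ob = "observe (ones K) v"
  have "observe (ones K) (shift t (gauge t v)) = gauge t ?ob"
    by (simp add: observe_shift[symmetric] gauge_observe[OF t])
  then have "posterior_avg2 g t (shift t (gauge t v))
      = gibbs_avg2 K (loglik (gauge t ?ob)) (g t (gauge t ?ob))"
    by (simp add: posterior_avg2_def)
  also have "\<dots> = gibbs_avg2 K (loglik ?ob) (\<lambda>x1 x2. g t (gauge t ?ob) (flip K t x1) (flip K t x2))"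
    by (rule gibbs_avg2_reindex[OF bij_betw_flip[OF t]]) (rule loglik_gauge[OF t])
  also have "\<dots> = posterior_avg2 g (ones K) v"
    unfolding posterior_avg2_def
  proof (rule gibbs_avg2_cong)
    fix x1 x2 assume "x1 \<in> configs K" "x2 \<in> configs K"
    then show "g t (gauge t ?ob) (flip K t x1) (flip K t x2) = g (ones K) ?ob x1 x2"
      using g t ones_configs flip_ones[OF t] unfolding gauge_invariant_def by metis
  qed
  finally show ?thesis ..
qed

text \<open>Averaging over all planted signals \<open>t\<close> turns the planted model into the Bayesian model
  with uniform prior.\<close>
lemma integral_posterior_avg2_ones:
  assumes g: "gauge_invariant g" and g_meas: "\<And>s x1 x2. (\<lambda>ob. g s ob x1 x2) \<in> borel_measurable Gauss"
    and int: "integrable Gauss (posterior_avg2 g (ones K))"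
  shows "(\<integral>v. posterior_avg2 g (ones K) v \<partial>Gauss)
       = (\<integral>v. (\<Sum>t\<in>configs K. likelihood_ratio t v * posterior_avg2 g t v) \<partial>Gauss) / 2 ^ K"
proof -
  note [measurable] = measurable_posterior_avg2[OF g_meas]
  have each: "integrable Gauss (\<lambda>v. likelihood_ratio t v * posterior_avg2 g t v)
      \<and> (\<integral>v. posterior_avg2 g (ones K) v \<partial>Gauss) = (\<integral>v. likelihood_ratio t v * posterior_avg2 g t v \<partial>Gauss)"
    if t: "t \<in> configs K" for t
  proof -
    have "posterior_avg2 g (ones K) = (\<lambda>v. posterior_avg2 g t (shift t (gauge t v)))"
      using posterior_avg2_ones_eq_shift_gauge[OF g t] by blast
    then show ?thesis
      using int integral_comp_shift_gauge[OF t, of "posterior_avg2 g t"]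
        integrable_comp_shift_gauge_iff[OF t, of "posterior_avg2 g t"]
      by simp
  qed
  have "2 ^ K * (\<integral>v. posterior_avg2 g (ones K) v \<partial>Gauss)
      = (\<Sum>t\<in>configs K. \<integral>v. posterior_avg2 g (ones K) v \<partial>Gauss)"
    by (simp add: card_configs)
  also have "\<dots> = (\<Sum>t\<in>configs K. \<integral>v. likelihood_ratio t v * posterior_avg2 g t v \<partial>Gauss)"
    using each by (intro sum.cong) auto
  also have "\<dots> = (\<integral>v. (\<Sum>t\<in>configs K. likelihood_ratio t v * posterior_avg2 g t v) \<partial>Gauss)"
    using each by (intro Bochner_Integration.integral_sum[symmetric]) auto
  finally show ?thesis
    by (simp add: field_simps)
qed

lemma nishimori_identity:
  assumes g: "gauge_invariant g" and g_meas: "\<And>s x1 x2. (\<lambda>ob. g s ob x1 x2) \<in> borel_measurable Gauss"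
    and "integrable Gauss (posterior_avg2 g (ones K))"
    and "integrable Gauss (posterior_avg2 (\<lambda>s ob x1 x2. g x2 ob x1 s) (ones K))"
  shows "(\<integral>v. posterior_avg2 g (ones K) v \<partial>Gauss)
       = (\<integral>v. posterior_avg2 (\<lambda>s ob x1 x2. g x2 ob x1 s) (ones K) v \<partial>Gauss)"
proof -
  have "gauge_invariant (\<lambda>s ob x1 x2. g x2 ob x1 s)"
    using g unfolding gauge_invariant_def by blast
  moreover have "(\<Sum>t\<in>configs K. likelihood_ratio t v * posterior_avg2 g t v)
      = (\<Sum>t\<in>configs K. likelihood_ratio t v * posterior_avg2 (\<lambda>s ob x1 x2. g x2 ob x1 s) t v)" for v
    using sum_exp_mult_gibbs_avg2_swap[of "loglik (observe (ones K) v)" K]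
    by (simp add: likelihood_ratio_def posterior_avg2_def exp_diff sum_divide_distrib[symmetric])
  ultimately show ?thesis
    using integral_posterior_avg2_ones[OF g g_meas assms(3)]
      integral_posterior_avg2_ones[of "\<lambda>s ob x1 x2. g x2 ob x1 s", OF _ g_meas assms(4)]
    by presburger
qed

lemma square_integrable_Zcomp: "i < N \<Longrightarrow> square_integrable Gauss (\<lambda>v. Zcomp N K b v x i)"
proof -
  assume i: "i < N"
  have component: "square_integrable Gauss (\<lambda>v. v j)" if "j \<in> I" for j
    using that measurable_component_Gauss integrable_PiM_std_normal_component_sq
    by (simp add: square_integrable_def)
  have "square_integrable Gauss (\<lambda>v. v (Rn i) + sqrt (b / real N) * (\<Sum>k<K. zvec x k * v (Rs i k)))"
    using i by (intro square_integrable_add square_integrable_cmult square_integrable_sum component) auto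
  then show ?thesis
    by (simp add: Zcomp_def mult.commute)
qed

lemma integrable_residual_mult:
  "i < N \<Longrightarrow> integrable Gauss (\<lambda>v. residual x (observe (ones K) v) i * residual y (observe (ones K) v) i)"
  using integrable_mult_if_square_integrable[OF square_integrable_Zcomp square_integrable_Zcomp]
  by (simp add: Zcomp_eq_residual)

definition sq_residual_obs :: "(nat \<Rightarrow> real) \<Rightarrow> (ridx \<Rightarrow> real) \<Rightarrow> (nat \<Rightarrow> real) \<Rightarrow> (nat \<Rightarrow> real) \<Rightarrow> real" where
  "sq_residual_obs s ob x1 x2 = (\<Sum>i<N. (residual x2 ob i)\<^sup>2)"

definition overlap_obs :: "(nat \<Rightarrow> real) \<Rightarrow> (ridx \<Rightarrow> real) \<Rightarrow> (nat \<Rightarrow> real) \<Rightarrow> (nat \<Rightarrow> real) \<Rightarrow> real" where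
  "overlap_obs s ob x1 x2 = (\<Sum>i<N. residual s ob i * residual x2 ob i) * (\<Sum>k<K. x1 k * x2 k)"

lemma gauge_invariant_sq_residual_obs: "gauge_invariant sq_residual_obs"
  unfolding gauge_invariant_def sq_residual_obs_def by (auto simp: residual_gauge)

lemma gauge_invariant_overlap_obs: "gauge_invariant overlap_obs"
  unfolding gauge_invariant_def overlap_obs_def
  by (auto simp: residual_gauge flip_mult_flip intro!: arg_cong2[where f="(*)"] sum.cong)

lemma integral_gibbs1_sq_Zcomp:
  "(\<integral>\<omega>. gibbs1 N K b l u \<omega> (\<lambda>x. \<Sum>i<N. (Zcomp N K b \<omega> x i)\<^sup>2) \<partial>gauss_data N K) = real N"
proof -
  let ?g' = "\<lambda>s ob x1 x2. sq_residual_obs x2 ob x1 s"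
  have gibbs1_eq: "gibbs1 N K b l u \<omega> (\<lambda>x. \<Sum>i<N. (Zcomp N K b \<omega> x i)\<^sup>2)
      = posterior_avg2 sq_residual_obs (ones K) \<omega>" for \<omega>
    by (simp add: gibbs1_eq_loglik posterior_avg2_def sq_residual_obs_def[abs_def] gibbs_avg2_snd Zcomp_eq_residual)
  have swapped: "posterior_avg2 ?g' (ones K) v = (\<Sum>i<N. (v (Rn i))\<^sup>2)" for v
    by (simp add: posterior_avg2_def sq_residual_obs_def[abs_def] gibbs_avg2_snd gibbs_avg_const residual_ones_observe)
  have "integrable Gauss (posterior_avg2 sq_residual_obs (ones K))"
    unfolding posterior_avg2_def sq_residual_obs_def[abs_def]
    by (intro integrable_gibbs_avg2) (auto simp: power2_eq_square intro: integrable_residual_mult)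
  moreover have "integrable Gauss (posterior_avg2 ?g' (ones K))"
    unfolding swapped by (intro Bochner_Integration.integrable_sum integrable_PiM_std_normal_component_sq) simp
  ultimately have "(\<integral>\<omega>. posterior_avg2 sq_residual_obs (ones K) \<omega> \<partial>Gauss) = (\<integral>v. (\<Sum>i<N. (v (Rn i))\<^sup>2) \<partial>Gauss)"
    unfolding swapped[symmetric]
    by (intro nishimori_identity gauge_invariant_sq_residual_obs) (simp_all add: sq_residual_obs_def)
  also have "\<dots> = real N"
    by (subst Bochner_Integration.integral_sum)
       (simp_all add: integrable_PiM_std_normal_component_sq integral_PiM_std_normal_component_sq)
  finally show ?thesis
    by (simp add: gauss_data_eq_Gauss gibbs1_eq)
qed

lemma gibbs2_overlap_decomposition:
  "gibbs2 N K b l u \<omega> (\<lambda>x1 x2. (\<Sum>i<N. \<omega> (Rn i) * Zcomp N K b \<omega> x2 i) * (\<Sum>k<K. zvec x1 k * zvec x2 k))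
     = (\<Sum>k<K. gibbs1 N K b l u \<omega> (\<lambda>x. (\<Sum>i<N. \<omega> (Rn i) * Zcomp N K b \<omega> x i) * zvec x k))
       - posterior_avg2 (\<lambda>s ob x1 x2. overlap_obs x2 ob x1 s) (ones K) \<omega>
       + posterior_avg2 overlap_obs (ones K) \<omega>"
proof -
  let ?E = "loglik (observe (ones K) \<omega>)"
  define P where "P x = (\<Sum>i<N. \<omega> (Rn i) * Zcomp N K b \<omega> x i)" for x
  have P_residual: "P x = (\<Sum>i<N. residual (ones K) (observe (ones K) \<omega>) i * residual x (observe (ones K) \<omega>) i)" for x
    unfolding P_def by (simp add: residual_ones_observe Zcomp_eq_residual)
  have overlap: "(\<Sum>k<K. zvec x1 k * zvec x2 k) = (\<Sum>k<K. 1 - x2 k) - (\<Sum>k<K. x1 k) + (\<Sum>k<K. x1 k * x2 k)"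
    for x1 x2
    unfolding zvec_def by (simp add: sum.distrib[symmetric] sum_subtractf[symmetric] algebra_simps)
  have "gibbs2 N K b l u \<omega> (\<lambda>x1 x2. P x2 * (\<Sum>k<K. zvec x1 k * zvec x2 k))
      = gibbs_avg2 K ?E (\<lambda>x1 x2. P x2 * (\<Sum>k<K. 1 - x2 k))
        - gibbs_avg2 K ?E (\<lambda>x1 x2. P x2 * (\<Sum>k<K. x1 k))
        + gibbs_avg2 K ?E (\<lambda>x1 x2. P x2 * (\<Sum>k<K. x1 k * x2 k))"
    unfolding gibbs2_eq_loglik overlap
    by (simp only: distrib_left right_diff_distrib gibbs_avg2_add gibbs_avg2_diff)
  moreover have "gibbs_avg2 K ?E (\<lambda>x1 x2. P x2 * (\<Sum>k<K. 1 - x2 k))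
      = (\<Sum>k<K. gibbs1 N K b l u \<omega> (\<lambda>x. P x * zvec x k))"
    by (simp add: gibbs_avg2_snd gibbs1_eq_loglik gibbs_avg_sum[symmetric] sum_distrib_left zvec_def)
  moreover have "gibbs_avg2 K ?E (\<lambda>x1 x2. P x2 * (\<Sum>k<K. x1 k))
      = posterior_avg2 (\<lambda>s ob x1 x2. overlap_obs x2 ob x1 s) (ones K) \<omega>"
    by (simp add: posterior_avg2_def overlap_obs_def P_residual mult.commute)
  moreover have "gibbs_avg2 K ?E (\<lambda>x1 x2. P x2 * (\<Sum>k<K. x1 k * x2 k)) = posterior_avg2 overlap_obs (ones K) \<omega>"
    by (simp add: posterior_avg2_def overlap_obs_def[abs_def] P_residual)
  ultimately show ?thesis
    by (simp add: P_def)
qed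

lemma integral_gibbs2_overlap:
  "(\<integral>\<omega>. gibbs2 N K b l u \<omega> (\<lambda>x1 x2. (\<Sum>i<N. \<omega> (Rn i) * Zcomp N K b \<omega> x2 i) * (\<Sum>k<K. zvec x1 k * zvec x2 k))
      \<partial>gauss_data N K)
   = (\<Sum>k<K. \<integral>\<omega>. gibbs1 N K b l u \<omega> (\<lambda>x. (\<Sum>i<N. \<omega> (Rn i) * Zcomp N K b \<omega> x i) * zvec x k) \<partial>gauss_data N K)"
proof -
  let ?g' = "\<lambda>s ob x1 x2. overlap_obs x2 ob x1 s"
  have residual_products: "integrable Gauss (\<lambda>v. (\<Sum>i<N. residual x (observe (ones K) v) i
                                                        * residual y (observe (ones K) v) i) * c)" for x y c
    by (intro integrable_mult_left Bochner_Integration.integrable_sum integrable_residual_mult) simp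
  have int_gibbs1: "integrable Gauss (\<lambda>\<omega>. gibbs1 N K b l u \<omega> (\<lambda>x. (\<Sum>i<N. \<omega> (Rn i) * Zcomp N K b \<omega> x i) * zvec x k))" for k
    unfolding gibbs1_eq_loglik
    using residual_products[of "ones K"]
    by (intro integrable_gibbs_avg) (simp_all add: residual_ones_observe Zcomp_eq_residual)
  have int_overlap: "integrable Gauss (posterior_avg2 overlap_obs (ones K))"
    unfolding posterior_avg2_def overlap_obs_def[abs_def]
    by (intro integrable_gibbs_avg2 residual_products) simp
  have int_swapped: "integrable Gauss (posterior_avg2 ?g' (ones K))"
    unfolding posterior_avg2_def overlap_obs_def
    by (intro integrable_gibbs_avg2 residual_products) simp
  have "(\<integral>\<omega>. posterior_avg2 overlap_obs (ones K) \<omega> \<partial>Gauss) = (\<integral>\<omega>. posterior_avg2 ?g' (ones K) \<omega> \<partial>Gauss)"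
    by (intro nishimori_identity gauge_invariant_overlap_obs int_overlap int_swapped)
       (simp add: overlap_obs_def)
  then show ?thesis
    using int_gibbs1 int_overlap int_swapped
    by (simp add: gauss_data_eq_Gauss gibbs2_overlap_decomposition Bochner_Integration.integral_sum)
qed

end

theorem lemma2:
  fixes N K :: nat and \<beta> :: real and B lam :: "real \<Rightarrow> real" and t u :: real
  assumes "N > 0"
    and "real K / real N = \<beta>"
    and "\<And>s. s \<in> {0..1} \<Longrightarrow> B s \<ge> 0"
    and "\<And>s. s \<in> {0..1} \<Longrightarrow> lam s \<ge> 0"
    and "t \<in> {0..1}"
    and "u \<ge> 0"
  shows "((1 / real N) * (\<integral>\<omega>. gibbs1 N K (B t) (lam t) u \<omega>
            (\<lambda>x. \<Sum>i<N. (Zcomp N K (B t) \<omega> x i)\<^sup>2) \<partial>gauss_data N K) = 1)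
       \<and> ((\<integral>\<omega>. gibbs2 N K (B t) (lam t) u \<omega>
            (\<lambda>x1 x2. (\<Sum>i<N. \<omega> (Rn i) * Zcomp N K (B t) \<omega> x2 i)
                     * (\<Sum>k<K. zvec x1 k * zvec x2 k)) \<partial>gauss_data N K)
         = (\<Sum>k<K. \<integral>\<omega>. gibbs1 N K (B t) (lam t) u \<omega>
            (\<lambda>x. (\<Sum>i<N. \<omega> (Rn i) * Zcomp N K (B t) \<omega> x i) * zvec x k) \<partial>gauss_data N K))"
proof -
  interpret interpolation_model N K "B t" "lam t" u
    by unfold_locales (rule assms(6))
  show ?thesis
    using integral_gibbs1_sq_Zcomp integral_gibbs2_overlap \<open>N > 0\<close> by simp
qed

end
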